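(* Let $n=1$, let $U\subset\mathbb{R}$ be a connected open subset, and let $k$ be a positive integer with binary expansion $k=2^{\mu_r}+2^{\mu_{r-1}}+\cdots+2^{\mu_1}$, $\mu_r>\mu_{r-1}>\cdots>\mu_1\ge0$ integers; set $\mu=\mu_r$ (so $\mu+1$ is the number of binary digits of $k$ and $r$ is the number of digits equal to $1$). Then the Nash function $x\mapsto x^k$ on $U$ satisfies $\mathrm{LC}(x^k)\le \mu+r-1$.
   Context: For an open $U\subset\mathbb{R}^n$ with coordinates $x_1,\dots,x_n$, $\mathcal E(U)$ is the $\mathbb{R}$-algebra of $C^\infty$ functions on $U$, and $\mathcal N(U)$ the set of Nash functions on $U$ (real analytic $f$ on $U$ such that $P(x,f(x))=0$ on $U$ for some non-zero polynomial $P(x,y)$). Let $\mathfrak F$ be the free $\mathcal E(U)$-module on symbols $\mathbf d h$ ($h\in\mathcal E(U)$) and $\mathfrak R\subset\mathfrak F$ the submodule generated by the "linearity generators" $\mathbf d(h+k)-\mathbf d h-\mathbf d k$, $\mathbf d(\lambda\ell)-\lambda\mathbf d\ell$ ($\lambda\in\mathbb{R}$) and the "Leibniz generators" $\mathbf d(pq)-p\,\mathbf d q-q\,\mathbf d p$ ($h,k,\ell,p,q\in\mathcal E(U)$). For $f\in\mathcal N(U)$, the Leibniz complexity $\mathrm{LC}(f)$ is the minimum, over all $g\in\mathcal N(U)$ not identically zero and all ways of writing $g\big(\mathbf d f-\sum_{i=1}^n\frac{\partial f}{\partial x_i}\mathbf d x_i\big)\in\mathfrak F$ as an $\mathcal E(U)$-linear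 combination of generators of $\mathfrak R$, of the number of Leibniz generators used, where the generator $\mathbf d(1\cdot1)-1\,\mathbf d(1)-1\,\mathbf d(1)$ is not counted (so $\mathbf d c=0$ for constants $c\in\mathbb{R}$ may be used freely) and linearity generators are not counted. *)

theory Defs
  imports "HOL-Analysis.Analysis" "HOL-Computational_Algebra.Polynomial"
begin

text \<open>Functions on an open set U of the real line are represented by total functions
  real \<Rightarrow> real; only their values on U matter.\<close>

definition smooth_on :: "real set \<Rightarrow> (real \<Rightarrow> real) \<Rightarrow> bool" where
  "smooth_on U f \<longleftrightarrow> (\<forall>n. \<forall>x\<in>U. ((deriv ^^ n) f) differentiable (at x))"

definition real_analytic_on :: "real set \<Rightarrow> (real \<Rightarrow> real) \<Rightarrow> bool" where
  "real_analytic_on U f \<longleftrightarrow>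
     (\<forall>x0\<in>U. \<exists>\<rho>>0. \<exists>a::nat \<Rightarrow> real.
        \<forall>x. \<bar>x - x0\<bar> < \<rho> \<longrightarrow> (\<lambda>n. a n * (x - x0) ^ n) sums f x)"

text \<open>Bivariate real polynomials P(x,y) are represented as polynomials in y whose
  coefficients are polynomials in x.\<close>
definition eval2 :: "real poly poly \<Rightarrow> real \<Rightarrow> real \<Rightarrow> real" where
  "eval2 P x y = poly (map_poly (\<lambda>c. poly c x) P) y"

definition nash_on :: "real set \<Rightarrow> (real \<Rightarrow> real) \<Rightarrow> bool" where
  "nash_on U f \<longleftrightarrow> real_analytic_on U f \<and>
     (\<exists>P. P \<noteq> 0 \<and> (\<forall>x\<in>U. eval2 P x (f x) = 0))"

text \<open>Elements of the free E(U)-module on symbols d h: finite formal sums, given as lists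
  of pairs (coefficient, symbol).  Two symbols are the same iff the functions agree on U.\<close>
type_synonym fmod = "((real \<Rightarrow> real) \<times> (real \<Rightarrow> real)) list"

definition fm_coeff :: "real set \<Rightarrow> fmod \<Rightarrow> (real \<Rightarrow> real) \<Rightarrow> real \<Rightarrow> real" where
  "fm_coeff U xs h t = sum_list (map (\<lambda>(c, s). if (\<forall>u\<in>U. s u = h u) then c t else 0) xs)"

definition fm_eq :: "real set \<Rightarrow> fmod \<Rightarrow> fmod \<Rightarrow> bool" where
  "fm_eq U xs ys \<longleftrightarrow> (\<forall>h. \<forall>t\<in>U. fm_coeff U xs h t = fm_coeff U ys h t)"

datatype gen =
    LinAdd "real \<Rightarrow> real" "real \<Rightarrow> real"
  | LinScal real "real \<Rightarrow> real"
  | Leib "real \<Rightarrow> real" "real \<Rightarrow> real"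

fun gen_elem :: "gen \<Rightarrow> fmod" where
  "gen_elem (LinAdd h k) =
     [(\<lambda>_. 1, \<lambda>t. h t + k t), (\<lambda>_. -1, h), (\<lambda>_. -1, k)]"
| "gen_elem (LinScal lam l) =
     [(\<lambda>_. 1, \<lambda>t. lam * l t), (\<lambda>_. - lam, l)]"
| "gen_elem (Leib p q) =
     [(\<lambda>_. 1, \<lambda>t. p t * q t), (\<lambda>t. - p t, q), (\<lambda>t. - q t, p)]"

fun gen_args_smooth :: "real set \<Rightarrow> gen \<Rightarrow> bool" where
  "gen_args_smooth U (LinAdd h k) \<longleftrightarrow> smooth_on U h \<and> smooth_on U k"
| "gen_args_smooth U (LinScal lam l) \<longleftrightarrow> smooth_on U l"
| "gen_args_smooth U (Leib p q) \<longleftrightarrow> smooth_on U p \<and> smooth_on U q"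

fun counted_leib :: "real set \<Rightarrow> gen \<Rightarrow> bool" where
  "counted_leib U (Leib p q) \<longleftrightarrow> \<not> (\<forall>t\<in>U. p t = 1 \<and> q t = 1)"
| "counted_leib U _ \<longleftrightarrow> False"

definition comb_valid :: "real set \<Rightarrow> ((real \<Rightarrow> real) \<times> gen) list \<Rightarrow> bool" where
  "comb_valid U cs \<longleftrightarrow> (\<forall>(a, G)\<in>set cs. smooth_on U a \<and> gen_args_smooth U G)"

definition comb_val :: "((real \<Rightarrow> real) \<times> gen) list \<Rightarrow> fmod" where
  "comb_val cs = concat (map (\<lambda>(a, G). map (\<lambda>(c, s). (\<lambda>t. a t * c t, s)) (gen_elem G)) cs)"

definition leib_count :: "real set \<Rightarrow> ((real \<Rightarrow> real) \<times> gen) list \<Rightarrow> nat" where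
  "leib_count U cs = length (filter (\<lambda>(a, G). counted_leib U G) cs)"

text \<open>Leibniz complexity of f on U (n = 1): g (df - f' dx) with g Nash, not identically zero.\<close>
definition LC :: "real set \<Rightarrow> (real \<Rightarrow> real) \<Rightarrow> nat" where
  "LC U f = (LEAST m. \<exists>g cs. nash_on U g \<and> (\<exists>t\<in>U. g t \<noteq> 0) \<and> comb_valid U cs \<and>
      fm_eq U (comb_val cs) [(g, f), (\<lambda>t. - (g t * deriv f t), \<lambda>t. t)] \<and>
      leib_count U cs = m)"

end

theory Submission imports Defs begin

text \<open>For a polynomial p the element dp - p' dx can be written with polynomial data only:
  squaring costs one Leibniz generator, since d(p^2) - 2pp' dx is
  [d(p p) - p dp - p dp] + 2p (dp - p' dx), and multiplying by x costs one more, since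
  d(px) - (px)' dx is [d(p x) - p dx - x dp] + x (dp - p' dx).  Reading the binary digits
  of k from the top, x^k is reached from x by \<mu> squarings and r - 1 multiplications
  by x, and the normalising factor g can be taken to be the constant 1.\<close>

lemma deriv_poly: "deriv (poly p) = poly (pderiv p)"
  by (rule ext, rule DERIV_imp_deriv, rule poly_DERIV)

lemma funpow_deriv_poly: "(deriv ^^ n) (poly p) = poly ((pderiv ^^ n) p)"
  by (induction n) (simp_all add: deriv_poly)

lemma smooth_on_poly: "smooth_on U (poly p)"
  unfolding smooth_on_def funpow_deriv_poly by simp

lemma nash_on_const: "nash_on U (\<lambda>_. c)"
proof -
  have "(\<lambda>n. (if n = 0 then c else 0) * (x - x0) ^ n) sums c" for x x0 :: real
  proof -
    have "(\<lambda>n. (if n = 0 then c else 0) * (x - x0) ^ n) = (\<lambda>n. if n = 0 then c else 0)"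
      by auto
    then show ?thesis using sums_single[of 0 "\<lambda>_. c"] by simp
  qed
  then have "real_analytic_on U (\<lambda>_. c)"
    unfolding real_analytic_on_def by (intro ballI exI[of _ 1] conjI zero_less_one exI allI impI)
  moreover have "eval2 [:[:- c:], 1:] x c = 0" for x
    by (simp add: eval2_def map_poly_pCons)
  moreover have "[:[:- c:], 1:] \<noteq> 0" by simp
  ultimately show ?thesis
    unfolding nash_on_def by blast
qed

lemma fm_coeff_append: "fm_coeff U (xs @ ys) h t = fm_coeff U xs h t + fm_coeff U ys h t"
  by (simp add: fm_coeff_def)

lemma fm_coeff_scale:
  "fm_coeff U (map (\<lambda>(c, s). (\<lambda>t. f t * c t, s)) xs) h t = f t * fm_coeff U xs h t"
  by (induction xs) (auto simp: fm_coeff_def algebra_simps)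

lemma fm_eqD: "fm_eq U xs ys \<Longrightarrow> t \<in> U \<Longrightarrow> fm_coeff U xs h t = fm_coeff U ys h t"
  by (simp add: fm_eq_def)

definition scale_comb ::
    "(real \<Rightarrow> real) \<Rightarrow> ((real \<Rightarrow> real) \<times> gen) list \<Rightarrow> ((real \<Rightarrow> real) \<times> gen) list" where
  "scale_comb a cs = map (\<lambda>(b, G). (\<lambda>t. a t * b t, G)) cs"

lemma comb_val_append: "comb_val (xs @ ys) = comb_val xs @ comb_val ys"
  by (simp add: comb_val_def)

lemma fm_coeff_comb_val_scale:
  "fm_coeff U (comb_val (scale_comb a cs)) h t = a t * fm_coeff U (comb_val cs) h t"
proof -
  have "comb_val (scale_comb a cs) = map (\<lambda>(c, s). (\<lambda>t. a t * c t, s)) (comb_val cs)"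
    by (induction cs) (auto simp: comb_val_def scale_comb_def mult.assoc)
  then show ?thesis by (simp add: fm_coeff_scale)
qed

lemma leib_count_append: "leib_count U (xs @ ys) = leib_count U xs + leib_count U ys"
  by (simp add: leib_count_def)

lemma leib_count_scale_comb: "leib_count U (scale_comb a cs) = leib_count U cs"
  by (induction cs) (auto simp: leib_count_def scale_comb_def)

lemma leib_count_Leib: "leib_count U [(a, Leib p q)] \<le> 1"
  by (simp add: leib_count_def)

definition poly_comb :: "((real \<Rightarrow> real) \<times> gen) list \<Rightarrow> bool" where
  "poly_comb cs \<longleftrightarrow>
     (\<forall>(a, G)\<in>set cs. (\<exists>q. a = poly q) \<and> (\<exists>p q. G = Leib (poly p) (poly q)))"

lemma poly_comb_imp_comb_valid: "poly_comb cs \<Longrightarrow> comb_valid U cs"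
  unfolding poly_comb_def comb_valid_def by (auto simp: smooth_on_poly)

lemma poly_comb_append: "poly_comb xs \<Longrightarrow> poly_comb ys \<Longrightarrow> poly_comb (xs @ ys)"
  by (auto simp: poly_comb_def)

lemma poly_comb_scale_comb: "poly_comb cs \<Longrightarrow> poly_comb (scale_comb (poly q) cs)"
  unfolding poly_comb_def scale_comb_def by (fastforce simp flip: poly_mult)

lemma poly_comb_Leib: "poly_comb [(poly c, Leib (poly p) (poly q))]"
  by (auto simp: poly_comb_def)

definition poly_defect :: "real poly \<Rightarrow> fmod" where
  "poly_defect p = [(\<lambda>_. 1, poly p), (\<lambda>t. - poly (pderiv p) t, \<lambda>t. t)]"

definition poly_certified :: "real set \<Rightarrow> nat \<Rightarrow> real poly \<Rightarrow> bool" where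
  "poly_certified U m p \<longleftrightarrow>
     (\<exists>cs. poly_comb cs \<and> leib_count U cs \<le> m \<and> fm_eq U (comb_val cs) (poly_defect p))"

lemma poly_certified_x: "poly_certified U 0 (monom 1 1)"
  unfolding poly_certified_def
  by (rule exI[of _ "[]"])
     (auto simp: poly_comb_def leib_count_def comb_val_def fm_eq_def fm_coeff_def
        poly_defect_def pderiv_monom poly_monom)

lemma poly_certified_square:
  assumes "poly_certified U m p"
  shows "poly_certified U (Suc m) (p * p)"
proof -
  obtain cs where cs: "poly_comb cs" "leib_count U cs \<le> m"
    "fm_eq U (comb_val cs) (poly_defect p)"
    using assms unfolding poly_certified_def by blast
  define cs' where "cs' = [(poly 1, Leib (poly p) (poly p))] @ scale_comb (poly (smult 2 p)) cs"
  have "poly_comb cs'"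
    unfolding cs'_def by (intro poly_comb_append poly_comb_Leib poly_comb_scale_comb cs(1))
  moreover have "leib_count U cs' \<le> Suc m"
    using cs(2) leib_count_Leib[of U "poly 1" "poly p" "poly p"]
    unfolding cs'_def leib_count_append leib_count_scale_comb by linarith
  moreover have "fm_coeff U (comb_val cs') h t = fm_coeff U (poly_defect (p * p)) h t"
    if "t \<in> U" for h t
    unfolding cs'_def comb_val_append fm_coeff_append fm_coeff_comb_val_scale
      fm_eqD[OF cs(3) that]
    by (simp add: comb_val_def fm_coeff_def poly_defect_def pderiv_mult algebra_simps)
  then have "fm_eq U (comb_val cs') (poly_defect (p * p))"
    unfolding fm_eq_def by blast
  ultimately show ?thesis unfolding poly_certified_def by blast
qed

lemma poly_certified_mult:
  assumes "poly_certified U m p" and "poly_certified U n q"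
  shows "poly_certified U (m + n + 1) (p * q)"
proof -
  obtain cs where cs: "poly_comb cs" "leib_count U cs \<le> m"
    "fm_eq U (comb_val cs) (poly_defect p)"
    using assms(1) unfolding poly_certified_def by blast
  obtain ds where ds: "poly_comb ds" "leib_count U ds \<le> n"
    "fm_eq U (comb_val ds) (poly_defect q)"
    using assms(2) unfolding poly_certified_def by blast
  define cs' where
    "cs' = [(poly 1, Leib (poly p) (poly q))] @ scale_comb (poly q) cs @ scale_comb (poly p) ds"
  have "poly_comb cs'"
    unfolding cs'_def
    by (intro poly_comb_append poly_comb_Leib poly_comb_scale_comb cs(1) ds(1))
  moreover have "leib_count U cs' \<le> m + n + 1"
    using cs(2) ds(2) leib_count_Leib[of U "poly 1" "poly p" "poly q"]
    unfolding cs'_def leib_count_append leib_count_scale_comb by linarith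
  moreover have "fm_coeff U (comb_val cs') h t = fm_coeff U (poly_defect (p * q)) h t"
    if "t \<in> U" for h t
    unfolding cs'_def comb_val_append fm_coeff_append fm_coeff_comb_val_scale
      fm_eqD[OF cs(3) that] fm_eqD[OF ds(3) that]
    by (simp add: comb_val_def fm_coeff_def poly_defect_def pderiv_mult algebra_simps)
  then have "fm_eq U (comb_val cs') (poly_defect (p * q))"
    unfolding fm_eq_def by blast
  ultimately show ?thesis unfolding poly_certified_def by blast
qed

lemma LC_poly_le:
  assumes "U \<noteq> {}" and "poly_certified U m p"
  shows "LC U (poly p) \<le> m"
proof -
  obtain cs where cs: "poly_comb cs" "leib_count U cs \<le> m"
    "fm_eq U (comb_val cs) (poly_defect p)"
    using assms(2) unfolding poly_certified_def by blast
  have "poly_defect p = [(\<lambda>_. 1, poly p), (\<lambda>t. - ((\<lambda>_. 1) t * deriv (poly p) t), \<lambda>t. t)]"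
    by (simp add: poly_defect_def deriv_poly)
  with cs assms(1) have "\<exists>g cs'. nash_on U g \<and> (\<exists>t\<in>U. g t \<noteq> 0) \<and> comb_valid U cs' \<and>
      fm_eq U (comb_val cs') [(g, poly p), (\<lambda>t. - (g t * deriv (poly p) t), \<lambda>t. t)] \<and>
      leib_count U cs' = leib_count U cs"
    by (intro exI[of _ "\<lambda>_. 1"] exI[of _ cs])
       (auto simp: nash_on_const poly_comb_imp_comb_valid)
  then have "LC U (poly p) \<le> leib_count U cs"
    unfolding LC_def by (rule Least_le)
  with cs(2) show ?thesis by simp
qed

lemma sum_list_pow2_halve:
  assumes "\<forall>i\<in>set ns. 0 < i"
  shows "(\<Sum>i\<leftarrow>ns. 2 ^ i :: nat) = 2 * (\<Sum>i\<leftarrow>map (\<lambda>i. i - 1) ns. 2 ^ i)"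
  using assms
proof (induction ns)
  case (Cons a ns)
  then obtain b where "a = Suc b" by (meson gr0_implies_Suc list.set_intros(1))
  with Cons show ?case by simp
qed simp

text \<open>The induction runs on last ns + length ns: dropping a lowest digit 0 shortens
  the list, halving lowers the top digit, and either step costs one generator.\<close>
lemma poly_certified_monom_binary:
  assumes "ns \<noteq> []" and "sorted_wrt (<) ns"
  shows "poly_certified U (last ns + length ns - 1) (monom 1 (\<Sum>i\<leftarrow>ns. 2 ^ i))"
  using assms
proof (induction "last ns + length ns" arbitrary: ns rule: less_induct)
  case less
  consider "ns = [0]" | ns' where "ns = 0 # ns'" "ns' \<noteq> []" | "\<forall>i\<in>set ns. 0 < i"
  proof -
    obtain a ns' where ns: "ns = a # ns'"
      using less.prems(1) by (cases ns) auto
    show thesis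
    proof (cases "a = 0")
      case True
      then show ?thesis using that(1,2) ns by (cases "ns' = []") auto
    next
      case False
      then show ?thesis using ns less.prems(2) by (intro that(3)) auto
    qed
  qed
  then show ?case
  proof cases
    case 1
    then show ?thesis using poly_certified_x by simp
  next
    case (2 ns')
    with less have "poly_certified U (last ns' + length ns' - 1) (monom 1 (\<Sum>i\<leftarrow>ns'. 2 ^ i))"
      by (intro less.hyps) auto
    from poly_certified_mult[OF this poly_certified_x] show ?thesis
      using 2 by (simp add: mult_monom)
  next
    case 3
    define ms where "ms = map (\<lambda>i. i - 1) ns"
    have "sorted_wrt (<) ms"
      unfolding ms_def sorted_wrt_map
      by (rule sorted_wrt_mono_rel[OF _ less.prems(2)]) (use 3 in auto)
    moreover have "ms \<noteq> []" "last ms = last ns - 1" "0 < last ns"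
      using less.prems(1) 3 by (auto simp: ms_def last_map)
    ultimately have "poly_certified U (last ms + length ms - 1) (monom 1 (\<Sum>i\<leftarrow>ms. 2 ^ i))"
      by (intro less.hyps) (auto simp: ms_def)
    then have "poly_certified U (Suc (last ms + length ms - 1))
        (monom 1 (\<Sum>i\<leftarrow>ms. 2 ^ i) * monom 1 (\<Sum>i\<leftarrow>ms. 2 ^ i))"
      by (rule poly_certified_square)
    moreover have "Suc (last ms + length ms - 1) = last ns + length ns - 1"
      using \<open>ms \<noteq> []\<close> \<open>last ms = last ns - 1\<close> \<open>0 < last ns\<close>
      by (cases ns) (simp_all add: ms_def)
    moreover have "(\<Sum>i\<leftarrow>ns. 2 ^ i) = (\<Sum>i\<leftarrow>ms. 2 ^ i) + (\<Sum>i\<leftarrow>ms. 2 ^ i :: nat)"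
      using sum_list_pow2_halve[OF 3] by (simp add: ms_def)
    ultimately show ?thesis by (simp add: mult_monom)
  qed
qed

theorem lemma3p4:
  fixes U :: "real set" and k :: nat and mus :: "nat list"
  assumes "open U" and "connected U" and "U \<noteq> {}"
    and "0 < k"
    and "mus \<noteq> []" and "sorted_wrt (>) mus"
    and "k = (\<Sum>i\<leftarrow>mus. 2 ^ i)"
  shows "LC U (\<lambda>x. x ^ k) \<le> hd mus + length mus - 1"
proof -
  have "poly_certified U (last (rev mus) + length (rev mus) - 1)
      (monom 1 (\<Sum>i\<leftarrow>rev mus. 2 ^ i))"
    using assms(5,6) by (intro poly_certified_monom_binary) (auto simp: sorted_wrt_rev)
  moreover have "(\<Sum>i\<leftarrow>rev mus. 2 ^ i) = k"
    using assms(7) by (simp flip: rev_map)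
  moreover have "last (rev mus) = hd mus"
    using assms(5) by (simp add: last_rev)
  ultimately have "LC U (poly (monom 1 k)) \<le> hd mus + length mus - 1"
    using assms(3) by (intro LC_poly_le) simp_all
  moreover have "poly (monom 1 k) = (\<lambda>x::real. x ^ k)"
    by (simp add: poly_monom fun_eq_iff)
  ultimately show ?thesis by simp
qed

end
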